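(* Consider the scheme described in the context, with $\mu_f,\mu_{g^*}\ge0$ valid strong convexity moduli of $f$ and $g^*$, and let $k\ge1$. Suppose $\tau_{k-1},\tau_k\in(0,1]$ satisfy $$\begin{cases}(L_{k-1}+\mu_f)(1-\tau_k)\tau_{k-1}^2+\mu_f(1-\tau_k)\tau_k\ \ge\ L_k\tau_k^2,\\ (L_{k-1}+\mu_f)(L_k+\mu_f)\tau_k\tau_{k-1}^2+(L_k+\mu_f)^2\tau_k^2\ \ge\ (L_{k-1}+\mu_f)L_k\tau_{k-1}^2.\end{cases}$$ Then for every $x\in\mathrm{dom} f$, $\mathcal{V}_{k+1}(x)\le(1-\tau_k)\mathcal{V}_k(x)$.
   Context: Setting: $f:\mathbb{R}^p\to\mathbb{R}\cup\{+\infty\}$, $g:\mathbb{R}^n\to\mathbb{R}\cup\{+\infty\}$ proper closed convex, $K\in\mathbb{R}^{n\times p}$ with $K\neq0$, $\|K\|$ its operator (spectral) norm; $g^*$ Fenchel conjugate of $g$; $\mathcal{L}(x,y):=f(x)+\langle Kx,y\rangle-g^*(y)$. $f$ is $\mu_f$-strongly convex means $f-\tfrac{\mu_f}{2}\|\cdot\|^2$ is convex ($\mu_f=0$ allowed); similarly for $g^*$ with $\mu_{g^*}$. $\mathrm{prox}_{\gamma h}(x):=\arg\min_z\{h(z)+\tfrac1{2\gamma}\|z-x\|^2\}$. For $\beta>0$: $g_\beta(u,\dot y):=\max_y\{\langle u,y\rangle-g^*(y)-\tfrac\beta2\|y-\dot y\|^2\}$ and $F_\beta(x,\dot y):=f(x)+g_\beta(Kx,\dot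 y)$. Scheme: given $x^0\in\mathrm{dom} f$, $\tilde y^0\in\mathrm{dom}\,g^*$, $\dot y\in\mathbb{R}^n$, $\beta_0>0$, and a sequence $\{\tau_k\}_{k\ge0}\subset(0,1]$, set $\hat x^0:=x^0$, $\beta_k:=\beta_{k-1}/(1+\tau_k)$ for $k\ge1$, $L_k:=\|K\|^2/(\beta_k+\mu_{g^*})$, $m_{k+1}:=(L_{k+1}+\mu_f)/(L_k+\mu_f)$, $\eta_{k+1}:=\frac{(1-\tau_k)\tau_k}{\tau_k^2+m_{k+1}\tau_{k+1}}$, and for $k\ge0$: $y^{k+1}:=\mathrm{prox}_{g^*/\beta_k}(\dot y+\tfrac1{\beta_k}K\hat x^k)$, $x^{k+1}:=\mathrm{prox}_{f/L_k}(\hat x^k-\tfrac1{L_k}K^\top y^{k+1})$, $\hat x^{k+1}:=x^{k+1}+\eta_{k+1}(x^{k+1}-x^k)$, $\tilde y^{k+1}:=(1-\tau_k)\tilde y^k+\tau_k y^{k+1}$. Lyapunov function, for $k\ge1$ and $x\in\mathrm{dom} f$: $\mathcal{V}_k(x):=F_{\beta_{k-1}}(x^k,\dot y)-\mathcal{L}(x,\tilde y^k)+\tfrac{(L_{k-1}+\mu_f)\tau_{k-1}^2}{2}\big\|\tfrac1{\tau_{k-1}}[x^k-(1-\tau_{k-1})x^{k-1}]-x\big\|^2$. *)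

theory Defs
  imports "HOL-Analysis.Analysis"
begin

definition dom_e :: "('a \<Rightarrow> ereal) \<Rightarrow> 'a set" where
  "dom_e h = {x. h x < \<infinity>}"

definition proper_e :: "('a \<Rightarrow> ereal) \<Rightarrow> bool" where
  "proper_e h \<longleftrightarrow> (\<forall>x. h x \<noteq> -\<infinity>) \<and> (\<exists>x. h x \<noteq> \<infinity>)"

definition epigraph_e :: "('a \<Rightarrow> ereal) \<Rightarrow> ('a \<times> real) set" where
  "epigraph_e h = {(x, t). h x \<le> ereal t}"

definition convex_e :: "('a::real_vector \<Rightarrow> ereal) \<Rightarrow> bool" where
  "convex_e h \<longleftrightarrow> convex (epigraph_e h)"

definition closed_e :: "('a::topological_space \<Rightarrow> ereal) \<Rightarrow> bool" where
  "closed_e h \<longleftrightarrow> closed (epigraph_e h)"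

definition pcc :: "('a::real_normed_vector \<Rightarrow> ereal) \<Rightarrow> bool" where
  "pcc h \<longleftrightarrow> proper_e h \<and> closed_e h \<and> convex_e h"

definition strongly_convex_e :: "('a::real_normed_vector \<Rightarrow> ereal) \<Rightarrow> real \<Rightarrow> bool" where
  "strongly_convex_e h \<mu> \<longleftrightarrow> convex_e (\<lambda>x. h x - ereal (\<mu> / 2 * (norm x)\<^sup>2))"

definition fconj :: "('a::real_inner \<Rightarrow> ereal) \<Rightarrow> 'a \<Rightarrow> ereal" where
  "fconj g y = (SUP u. ereal (inner u y) - g u)"

definition prox :: "real \<Rightarrow> ('a::real_normed_vector \<Rightarrow> ereal) \<Rightarrow> 'a \<Rightarrow> 'a" where
  "prox \<gamma> h v = (THE z. \<forall>w. h z + ereal (1 / (2 * \<gamma>) * (norm (z - v))\<^sup>2)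
                              \<le> h w + ereal (1 / (2 * \<gamma>) * (norm (w - v))\<^sup>2))"

definition lagr :: "(real^'p \<Rightarrow> ereal) \<Rightarrow> (real^'n \<Rightarrow> ereal) \<Rightarrow> real^'p^'n
                     \<Rightarrow> real^'p \<Rightarrow> real^'n \<Rightarrow> ereal" where
  "lagr f g K x y = f x + ereal (inner (K *v x) y) - fconj g y"

definition g_beta :: "('a::real_inner \<Rightarrow> ereal) \<Rightarrow> real \<Rightarrow> 'a \<Rightarrow> 'a \<Rightarrow> ereal" where
  "g_beta g \<beta> u yd = (SUP y. ereal (inner u y) - fconj g y - ereal (\<beta> / 2 * (norm (y - yd))\<^sup>2))"

definition F_beta :: "(real^'p \<Rightarrow> ereal) \<Rightarrow> (real^'n \<Rightarrow> ereal) \<Rightarrow> real^'p^'n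
                       \<Rightarrow> real \<Rightarrow> real^'p \<Rightarrow> real^'n \<Rightarrow> ereal" where
  "F_beta f g K \<beta> x yd = f x + g_beta g \<beta> (K *v x) yd"

fun beta_seq :: "real \<Rightarrow> (nat \<Rightarrow> real) \<Rightarrow> nat \<Rightarrow> real" where
  "beta_seq \<beta>0 \<tau> 0 = \<beta>0"
| "beta_seq \<beta>0 \<tau> (Suc k) = beta_seq \<beta>0 \<tau> k / (1 + \<tau> (Suc k))"

definition L_seq :: "real^'p^'n \<Rightarrow> real \<Rightarrow> (nat \<Rightarrow> real) \<Rightarrow> real \<Rightarrow> nat \<Rightarrow> real" where
  "L_seq K \<beta>0 \<tau> \<mu>g k = (onorm (\<lambda>x. K *v x))\<^sup>2 / (beta_seq \<beta>0 \<tau> k + \<mu>g)"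

definition eta_seq :: "real^'p^'n \<Rightarrow> real \<Rightarrow> (nat \<Rightarrow> real) \<Rightarrow> real \<Rightarrow> real \<Rightarrow> nat \<Rightarrow> real" where
  "eta_seq K \<beta>0 \<tau> \<mu>f \<mu>g k =
     (let m = (L_seq K \<beta>0 \<tau> \<mu>g (Suc k) + \<mu>f) / (L_seq K \<beta>0 \<tau> \<mu>g k + \<mu>f)
      in (1 - \<tau> k) * \<tau> k / ((\<tau> k)\<^sup>2 + m * \<tau> (Suc k)))"

text \<open>Lyapunov function V_k(x), meaningful for k >= 1\<close>
definition V_fun :: "(real^'p \<Rightarrow> ereal) \<Rightarrow> (real^'n \<Rightarrow> ereal) \<Rightarrow> real^'p^'n \<Rightarrow> real
    \<Rightarrow> (nat \<Rightarrow> real) \<Rightarrow> real \<Rightarrow> real \<Rightarrow> real^'n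
    \<Rightarrow> (nat \<Rightarrow> real^'p) \<Rightarrow> (nat \<Rightarrow> real^'n) \<Rightarrow> nat \<Rightarrow> real^'p \<Rightarrow> ereal" where
  "V_fun f g K \<beta>0 \<tau> \<mu>f \<mu>g yd xs yt k x =
     F_beta f g K (beta_seq \<beta>0 \<tau> (k - 1)) (xs k) yd - lagr f g K x (yt k)
     + ereal ((L_seq K \<beta>0 \<tau> \<mu>g (k - 1) + \<mu>f) * (\<tau> (k - 1))\<^sup>2 / 2 *
          (norm ((1 / \<tau> (k - 1)) *\<^sub>R (xs k - (1 - \<tau> (k - 1)) *\<^sub>R xs (k - 1)) - x))\<^sup>2)"

end

theory Submission
  imports Defs
begin

text \<open>
  The x-update is a proximal step, so f satisfies a three-point inequality at x_{k+1}; the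
  smoothed function g_beta(., ydot) is (beta + mu_g)^{-1}-smooth with gradient given by the
  prox point y_{k+1}. Together they bound F_beta(x_{k+1}) by the Lagrangian at y_{k+1} of any
  w, up to L_k/2 |w - xhat_k|^2. For w = (1 - tau_k) x_k + tau_k x, strong convexity of f
  splits the Lagrangian, concavity in y takes care of the averaged dual iterate, and the
  decrease beta_k = beta_{k-1}/(1 + tau_k) is absorbed by the proximal term defining
  g_beta(K x_k). What is left is a quadratic form in x - x_k and x_k - x_{k-1}, whose
  coefficients are controlled exactly by the two conditions on tau_{k-1}, tau_k and by the
  choice of the momentum eta_k.
\<close>

section \<open>Inner product identities\<close>

lemma norm_convex_comb_power2:
  fixes x y :: "'a::real_inner"
  shows "(norm ((1 - t) *\<^sub>R x + t *\<^sub>R y))\<^sup>2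
    = (1 - t) * (norm x)\<^sup>2 + t * (norm y)\<^sup>2 - t * (1 - t) * (norm (x - y))\<^sup>2"
  by (simp add: power2_norm_eq_inner inner_commute algebra_simps)

lemma norm_diff_add_scaleR_power2:
  fixes p q u :: "'a::real_inner"
  shows "(norm (q - (p + s *\<^sub>R u)))\<^sup>2 = (norm (q - p))\<^sup>2 - 2 * s * inner u (q - p) + s\<^sup>2 * (norm u)\<^sup>2"
proof -
  have "q - (p + s *\<^sub>R u) = (q - p) - s *\<^sub>R u" by (simp add: algebra_simps)
  then show ?thesis
    unfolding power2_norm_eq_inner
    by (simp add: inner_diff_left inner_diff_right inner_commute algebra_simps power2_eq_square)
qed

lemma inner_le_Young:
  fixes v r :: "'a::real_inner"
  assumes "c > 0"
  shows "inner v r \<le> (norm v)\<^sup>2 / (2 * c) + c / 2 * (norm r)\<^sup>2"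
proof -
  have "0 \<le> (norm (r - (0 + (1 / c) *\<^sub>R v)))\<^sup>2" by simp
  then have "0 \<le> (norm r)\<^sup>2 - 2 / c * inner v r + (norm v)\<^sup>2 / c\<^sup>2"
    unfolding norm_diff_add_scaleR_power2 by (simp add: power_divide)
  then show ?thesis
    using assms by (simp add: field_simps power2_eq_square)
qed

lemma norm_scaleR_diff_scaleR_power2:
  fixes e d :: "'a::real_inner"
  shows "(norm (x *\<^sub>R e - y *\<^sub>R d))\<^sup>2 = x\<^sup>2 * (norm e)\<^sup>2 - 2 * x * y * inner e d + y\<^sup>2 * (norm d)\<^sup>2"
  unfolding power2_norm_eq_inner
  by (simp add: inner_diff_left inner_diff_right inner_commute algebra_simps power2_eq_square)

lemma quadratic_form_nonneg:
  fixes e d :: "'a::real_inner"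
  assumes A: "A \<ge> 0" and C: "C \<ge> 0" and discr: "B\<^sup>2 \<le> A * C"
  shows "0 \<le> A * (norm e)\<^sup>2 - 2 * B * inner e d + C * (norm d)\<^sup>2"
proof (cases "A = 0")
  case True
  then show ?thesis using discr C by simp
next
  case False
  then have "A > 0" using A by simp
  have "A * (A * (norm e)\<^sup>2 - 2 * B * inner e d + C * (norm d)\<^sup>2)
      = (norm (A *\<^sub>R e - B *\<^sub>R d))\<^sup>2 + (A * C - B\<^sup>2) * (norm d)\<^sup>2"
    unfolding norm_scaleR_diff_scaleR_power2 by (simp add: algebra_simps power2_eq_square)
  also have "\<dots> \<ge> 0" using discr by simp
  finally show ?thesis using \<open>A > 0\<close> by (simp add: zero_le_mult_iff)
qed

section \<open>Extended-real convex functions\<close>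

lemma proper_e_dom_eE:
  assumes "proper_e \<phi>" "x \<in> dom_e \<phi>"
  obtains r where "\<phi> x = ereal r"
  using assms by (cases "\<phi> x") (auto simp: proper_e_def dom_e_def)

lemma convex_eD:
  assumes "convex_e \<phi>" "\<phi> x = ereal a" "\<phi> y = ereal b" "0 \<le> t" "t \<le> 1"
  shows "\<phi> ((1 - t) *\<^sub>R x + t *\<^sub>R y) \<le> ereal ((1 - t) * a + t * b)"
proof -
  have "(x, a) \<in> epigraph_e \<phi>" "(y, b) \<in> epigraph_e \<phi>"
    using assms by (auto simp: epigraph_e_def)
  then have "(1 - t) *\<^sub>R (x, a) + t *\<^sub>R (y, b) \<in> epigraph_e \<phi>"
    using assms(1,4,5) unfolding convex_e_def by (intro convexD) auto
  then show ?thesis by (simp add: epigraph_e_def)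
qed

lemma strongly_convex_eD:
  fixes \<phi> :: "'a::real_inner \<Rightarrow> ereal"
  assumes "strongly_convex_e \<phi> \<mu>" "\<phi> x = ereal a" "\<phi> y = ereal b" "0 \<le> t" "t \<le> 1"
  shows "\<phi> ((1 - t) *\<^sub>R x + t *\<^sub>R y)
    \<le> ereal ((1 - t) * a + t * b - \<mu> / 2 * t * (1 - t) * (norm (x - y))\<^sup>2)"
proof -
  let ?z = "(1 - t) *\<^sub>R x + t *\<^sub>R y"
  have "\<phi> ?z - ereal (\<mu> / 2 * (norm ?z)\<^sup>2)
      \<le> ereal ((1 - t) * (a - \<mu> / 2 * (norm x)\<^sup>2) + t * (b - \<mu> / 2 * (norm y)\<^sup>2))"
    using assms unfolding strongly_convex_e_def
    by (intro convex_eD[where \<phi> = "\<lambda>x. \<phi> x - ereal (\<mu> / 2 * (norm x)\<^sup>2)"]) auto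
  then have "\<phi> ?z
      \<le> ereal ((1 - t) * (a - \<mu> / 2 * (norm x)\<^sup>2) + t * (b - \<mu> / 2 * (norm y)\<^sup>2) + \<mu> / 2 * (norm ?z)\<^sup>2)"
    by (cases "\<phi> ?z") auto
  also have "\<dots> = ereal ((1 - t) * a + t * b - \<mu> / 2 * t * (1 - t) * (norm (x - y))\<^sup>2)"
    by (subst norm_convex_comb_power2) (simp add: field_simps)
  finally show ?thesis .
qed

lemma convex_e_affine_minorant:
  fixes \<phi> :: "'a::euclidean_space \<Rightarrow> ereal"
  assumes "convex_e \<phi>" "closed_e \<phi>" "proper_e \<phi>"
  shows "\<exists>a b. \<forall>x. ereal (inner a x + b) \<le> \<phi> x"
proof -
  obtain x0 c where x0: "\<phi> x0 = ereal c"
    using assms(3) unfolding proper_e_def by (metis ereal_cases)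
  have "(x0, c - 1) \<notin> epigraph_e \<phi>" using x0 by (simp add: epigraph_e_def)
  then obtain A b where Ab: "inner A (x0, c - 1) < b" "\<forall>p\<in>epigraph_e \<phi>. b < inner A p"
    using separating_hyperplane_closed_point[of "epigraph_e \<phi>" "(x0, c - 1)"] assms(1,2)
    unfolding convex_e_def closed_e_def by blast
  obtain a s where A: "A = (a, s)" by (cases A)
  have above: "b < inner a x + s * r" if "\<phi> x \<le> ereal r" for x r
    using Ab(2) that A by (auto simp: epigraph_e_def)
  \<comment> \<open>(x0, c) and (x0, c - 1) lie on opposite sides, so the hyperplane is not vertical\<close>
  have s: "s > 0" using above[of x0 c] Ab(1) x0 A by (simp add: algebra_simps)
  have "ereal (inner (- (1 / s) *\<^sub>R a) x + b / s) \<le> \<phi> x" for x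
  proof (cases "\<phi> x")
    case (real r)
    then have "(b - inner a x) / s \<le> r" using above[of x r] s by (simp add: field_simps)
    then show ?thesis using real by (simp add: diff_divide_distrib)
  qed (use assms(3) in \<open>auto simp: proper_e_def\<close>)
  then show ?thesis by blast
qed

lemma closed_e_add_continuous:
  fixes \<phi> :: "'a::real_normed_vector \<Rightarrow> ereal"
  assumes "closed_e \<phi>" "continuous_on UNIV q"
  shows "closed_e (\<lambda>w. \<phi> w + ereal (q w))"
proof -
  have "\<phi> w + ereal (q w) \<le> ereal t \<longleftrightarrow> \<phi> w \<le> ereal (t - q w)" for w t
    by (cases "\<phi> w") auto
  then have "epigraph_e (\<lambda>w. \<phi> w + ereal (q w))
      = (\<lambda>p. (fst p, snd p - q (fst p))) -` epigraph_e \<phi>"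
    by (auto simp: epigraph_e_def)
  moreover have "continuous_on UNIV (\<lambda>p::'a \<times> real. (fst p, snd p - q (fst p)))"
    by (intro continuous_intros continuous_on_compose2[OF assms(2)]) auto
  ultimately show ?thesis
    using assms(1) unfolding closed_e_def by (simp add: closed_vimage)
qed

lemma closed_e_attains_min:
  fixes \<psi> :: "'a::euclidean_space \<Rightarrow> ereal"
  assumes closed: "closed_e \<psi>" and x0: "\<psi> x0 = ereal M" and below: "\<And>w. ereal m \<le> \<psi> w"
    and sublevel: "bounded {w. \<psi> w \<le> ereal M}"
  shows "\<exists>z. \<forall>w. \<psi> z \<le> \<psi> w"
proof -
  define S where "S = epigraph_e \<psi> \<inter> {p. snd p \<le> M}"
  have "S \<subseteq> {w. \<psi> w \<le> ereal M} \<times> {m..M}"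
  proof safe
    fix w t assume "(w, t) \<in> S"
    then have "\<psi> w \<le> ereal t" "t \<le> M" by (auto simp: S_def epigraph_e_def)
    moreover have "ereal m \<le> \<psi> w" by (rule below)
    ultimately have "ereal m \<le> ereal t" "\<psi> w \<le> ereal M"
      using order.trans ereal_less_eq(3) by blast+
    then show "\<psi> w \<le> ereal M" "t \<in> {m..M}" using \<open>t \<le> M\<close> by auto
  qed
  then have "bounded S"
    using bounded_subset bounded_Times[OF sublevel bounded_closed_interval] by blast
  moreover have "closed S"
    using closed unfolding S_def closed_e_def by (intro closed_Int closed_Collect_le continuous_intros)
  ultimately have "compact S" by (simp add: compact_eq_bounded_closed)
  moreover have "(x0, M) \<in> S" using x0 by (simp add: S_def epigraph_e_def)
  ultimately obtain p where p: "p \<in> S" "\<And>q. q \<in> S \<Longrightarrow> snd p \<le> snd q"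
    using continuous_attains_inf[of S snd] continuous_on_snd[OF continuous_on_id] by blast
  have "\<psi> (fst p) \<le> \<psi> w" for w
  proof (cases "\<psi> w \<le> ereal M")
    case True
    then obtain r where r: "\<psi> w = ereal r"
      using below[of w] by (cases "\<psi> w") auto
    then have "snd p \<le> r" using p(2)[of "(w, r)"] True by (simp add: S_def epigraph_e_def)
    then show ?thesis using p(1) r by (auto simp: S_def epigraph_e_def intro: order_trans)
  next
    case False
    have "\<psi> (fst p) \<le> ereal M" using p(1) by (auto simp: S_def epigraph_e_def intro: order.trans)
    then show ?thesis using False by simp
  qed
  then show ?thesis by blast
qed

section \<open>Proximal points\<close>

lemma proximal_minimizer_exists:
  fixes \<phi> :: "'a::euclidean_space \<Rightarrow> ereal"
  assumes closed: "closed_e \<phi>" and proper: "proper_e \<phi>"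
    and minorant: "\<And>x. ereal (inner a x + b) \<le> \<phi> x" and c: "c > 0"
  shows "\<exists>z. \<forall>w. \<phi> z + ereal (c * (norm (z - v))\<^sup>2) \<le> \<phi> w + ereal (c * (norm (w - v))\<^sup>2)"
proof -
  define \<psi> where "\<psi> w = \<phi> w + ereal (c * (norm (w - v))\<^sup>2)" for w
  \<comment> \<open>completing the square, the affine minorant plus c |w - v|^2 is a coercive quadratic\<close>
  define v' where "v' = v + (- 1 / (2 * c)) *\<^sub>R a"
  define m where "m = b + inner a v - (norm a)\<^sup>2 / (4 * c)"
  have "inner a w + b + c * (norm (w - v))\<^sup>2 = m + c * (norm (w - v'))\<^sup>2" for w
    unfolding v'_def m_def norm_diff_add_scaleR_power2
    using c by (simp add: field_simps power2_eq_square inner_diff_right inner_commute)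
  then have below: "ereal (m + c * (norm (w - v'))\<^sup>2) \<le> \<psi> w" for w
    using minorant[of w] unfolding \<psi>_def by (metis add_right_mono plus_ereal.simps(1))
  obtain x0 M where x0: "\<psi> x0 = ereal M"
    using proper unfolding proper_e_def \<psi>_def by (metis ereal_cases plus_ereal.simps)
  have "{w. \<psi> w \<le> ereal M} \<subseteq> cball v' (sqrt ((M - m) / c))"
  proof
    fix w assume "w \<in> {w. \<psi> w \<le> ereal M}"
    then have "m + c * (norm (w - v'))\<^sup>2 \<le> M"
      using below[of w] by (meson ereal_less_eq(3) mem_Collect_eq order.trans)
    then have "(norm (w - v'))\<^sup>2 \<le> (M - m) / c"
      using c by (simp add: field_simps)
    then show "w \<in> cball v' (sqrt ((M - m) / c))"
      by (simp add: dist_norm norm_minus_commute real_le_rsqrt)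
  qed
  moreover have "closed_e \<psi>"
    unfolding \<psi>_def using closed by (intro closed_e_add_continuous continuous_intros)
  moreover have "ereal m \<le> \<psi> w" for w
    using below[of w] c order.trans[of "ereal m" "ereal (m + c * (norm (w - v'))\<^sup>2)"] by simp
  ultimately obtain z where "\<forall>w. \<psi> z \<le> \<psi> w"
    using closed_e_attains_min[of \<psi> x0 M m] x0 by (meson bounded_cball bounded_subset)
  then show ?thesis unfolding \<psi>_def by blast
qed

lemma strongly_convex_minimizer_growth:
  fixes \<phi> :: "'a::real_inner \<Rightarrow> ereal"
  assumes sc: "strongly_convex_e \<phi> \<mu>" and z: "\<phi> z = ereal a"
    and min: "\<And>w. \<phi> z + ereal (c * (norm (z - v))\<^sup>2) \<le> \<phi> w + ereal (c * (norm (w - v))\<^sup>2)"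
  shows "\<phi> z + ereal (c * (norm (z - v))\<^sup>2) + ereal ((c + \<mu> / 2) * (norm (w - z))\<^sup>2)
    \<le> \<phi> w + ereal (c * (norm (w - v))\<^sup>2)"
proof (cases "\<phi> w")
  case (real b)
  \<comment> \<open>compare z with the points (1 - t) z + t w, then let t tend to 0\<close>
  have shrink: "(1 - t) * ((c + \<mu> / 2) * (norm (w - z))\<^sup>2)
      \<le> b + c * (norm (w - v))\<^sup>2 - a - c * (norm (z - v))\<^sup>2" if t: "0 < t" "t < 1" for t
  proof -
    let ?zt = "(1 - t) *\<^sub>R z + t *\<^sub>R w"
    have "?zt - v = (1 - t) *\<^sub>R (z - v) + t *\<^sub>R (w - v)" by (simp add: algebra_simps)
    then have zt_v: "(norm (?zt - v))\<^sup>2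
        = (1 - t) * (norm (z - v))\<^sup>2 + t * (norm (w - v))\<^sup>2 - t * (1 - t) * (norm (w - z))\<^sup>2"
      using norm_convex_comb_power2[of t "z - v" "w - v"] by (simp add: norm_minus_commute)
    have "\<phi> z + ereal (c * (norm (z - v))\<^sup>2) \<le> \<phi> ?zt + ereal (c * (norm (?zt - v))\<^sup>2)"
      by (rule min)
    also have "\<dots> \<le> ereal ((1 - t) * a + t * b - \<mu> / 2 * t * (1 - t) * (norm (w - z))\<^sup>2)
        + ereal (c * (norm (?zt - v))\<^sup>2)"
      using strongly_convex_eD[OF sc z real, of t] t
      by (intro add_right_mono) (simp add: norm_minus_commute)
    finally have "a + c * (norm (z - v))\<^sup>2 \<le> (1 - t) * a + t * b
        - \<mu> / 2 * t * (1 - t) * (norm (w - z))\<^sup>2 + c * (norm (?zt - v))\<^sup>2"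
      using z by simp
    then have "t * ((1 - t) * ((c + \<mu> / 2) * (norm (w - z))\<^sup>2))
        \<le> t * (b + c * (norm (w - v))\<^sup>2 - a - c * (norm (z - v))\<^sup>2)"
      unfolding zt_v by (simp add: algebra_simps)
    then show ?thesis by (rule mult_left_le_imp_le) (use t in simp)
  qed
  have "(c + \<mu> / 2) * (norm (w - z))\<^sup>2 \<le> b + c * (norm (w - v))\<^sup>2 - a - c * (norm (z - v))\<^sup>2"
  proof (rule field_le_mult_one_interval)
    fix s :: real assume "0 < s" "s < 1"
    then have "0 < 1 - s" "1 - s < 1" by simp_all
    from shrink[OF this]
    show "s * ((c + \<mu> / 2) * (norm (w - z))\<^sup>2)
        \<le> b + c * (norm (w - v))\<^sup>2 - a - c * (norm (z - v))\<^sup>2"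
      by simp
  qed
  then show ?thesis using real z by simp
next
  case MInf
  then show ?thesis using min[of w] z by simp
qed simp

lemma prox_three_point:
  fixes \<phi> :: "'a::euclidean_space \<Rightarrow> ereal"
  assumes closed: "closed_e \<phi>" and proper: "proper_e \<phi>"
    and minorant: "\<And>x. ereal (inner a x + b) \<le> \<phi> x"
    and sc: "strongly_convex_e \<phi> \<mu>" "\<mu> \<ge> 0" and \<gamma>: "\<gamma> > 0"
  shows "prox \<gamma> \<phi> v \<in> dom_e \<phi>"
    and "\<phi> (prox \<gamma> \<phi> v) + ereal (1 / (2 * \<gamma>) * (norm (prox \<gamma> \<phi> v - v))\<^sup>2)
        + ereal ((1 / (2 * \<gamma>) + \<mu> / 2) * (norm (w - prox \<gamma> \<phi> v))\<^sup>2)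
      \<le> \<phi> w + ereal (1 / (2 * \<gamma>) * (norm (w - v))\<^sup>2)"
proof -
  define c where "c = 1 / (2 * \<gamma>)"
  have c: "c > 0" using \<gamma> by (simp add: c_def)
  have finite: "\<exists>r. \<phi> z = ereal r"
    if "\<forall>w. \<phi> z + ereal (c * (norm (z - v))\<^sup>2) \<le> \<phi> w + ereal (c * (norm (w - v))\<^sup>2)" for z
  proof -
    obtain x0 where "\<phi> x0 \<noteq> \<infinity>" using proper by (auto simp: proper_e_def)
    then have "\<phi> z \<noteq> \<infinity>" using that[rule_format, of x0] by auto
    then show ?thesis using proper by (cases "\<phi> z") (auto simp: proper_e_def)
  qed
  obtain z where z: "\<forall>w. \<phi> z + ereal (c * (norm (z - v))\<^sup>2) \<le> \<phi> w + ereal (c * (norm (w - v))\<^sup>2)"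
    using proximal_minimizer_exists[OF closed proper minorant c] by blast
  then obtain r where r: "\<phi> z = ereal r" using finite by blast
  note growth = strongly_convex_minimizer_growth[OF sc(1) r z[rule_format]]
  have "prox \<gamma> \<phi> v = z"
    unfolding prox_def c_def[symmetric]
  proof (rule the_equality)
    fix z' assume z': "\<forall>w. \<phi> z' + ereal (c * (norm (z' - v))\<^sup>2) \<le> \<phi> w + ereal (c * (norm (w - v))\<^sup>2)"
    then obtain r' where "\<phi> z' = ereal r'" using finite by blast
    then have "(c + \<mu> / 2) * (norm (z' - z))\<^sup>2 \<le> 0"
      using growth[of z'] z'[rule_format, of z] r by simp
    moreover have "c + \<mu> / 2 > 0" using c sc(2) by simp
    ultimately show "z' = z" by (simp add: mult_le_0_iff)
  qed (use z in blast)
  then show "prox \<gamma> \<phi> v \<in> dom_e \<phi>"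
    and "\<phi> (prox \<gamma> \<phi> v) + ereal (1 / (2 * \<gamma>) * (norm (prox \<gamma> \<phi> v - v))\<^sup>2)
        + ereal ((1 / (2 * \<gamma>) + \<mu> / 2) * (norm (w - prox \<gamma> \<phi> v))\<^sup>2)
      \<le> \<phi> w + ereal (1 / (2 * \<gamma>) * (norm (w - v))\<^sup>2)"
    using r growth[of w] unfolding c_def by (auto simp: dom_e_def)
qed

section \<open>Conjugates and the smoothed function g_beta\<close>

lemma fconj_affine_minorant:
  assumes "proper_e g"
  shows "\<exists>a b. \<forall>y. ereal (inner a y + b) \<le> fconj g y"
proof -
  obtain u c where c: "g u = ereal c"
    using assms unfolding proper_e_def by (metis ereal_cases)
  have "ereal (inner u y) - g u \<le> fconj g y" for y
    unfolding fconj_def by (rule SUP_upper) simp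
  then have "ereal (inner u y + - c) \<le> fconj g y" for y using c by simp
  then show ?thesis by blast
qed

lemma proper_fconj:
  assumes "proper_e g" "y0 \<in> dom_e (fconj g)"
  shows "proper_e (fconj g)"
proof -
  obtain a b where "\<And>y. ereal (inner a y + b) \<le> fconj g y"
    using fconj_affine_minorant[OF assms(1)] by blast
  then have "fconj g y \<noteq> -\<infinity>" for y by (metis MInfty_neq_ereal(1) ereal_infty_less_eq(2))
  then show ?thesis using assms(2) by (auto simp: proper_e_def dom_e_def)
qed

lemma closed_fconj:
  assumes "proper_e g"
  shows "closed_e (fconj g)"
proof -
  have "epigraph_e (fconj g) = (\<Inter>u. {p. ereal (inner u (fst p)) - g u \<le> ereal (snd p)})"
    by (auto simp: epigraph_e_def fconj_def SUP_le_iff)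
  moreover have "closed {p :: 'a \<times> real. ereal (inner u (fst p)) - g u \<le> ereal (snd p)}" for u
  proof (cases "g u")
    case (real r)
    then have "{p :: 'a \<times> real. ereal (inner u (fst p)) - g u \<le> ereal (snd p)}
        = {p. inner u (fst p) - r \<le> snd p}" by auto
    moreover have "closed {p :: 'a \<times> real. inner u (fst p) - r \<le> snd p}"
      by (intro closed_Collect_le continuous_intros)
    ultimately show ?thesis by simp
  qed (use assms in \<open>auto simp: proper_e_def\<close>)
  ultimately show ?thesis unfolding closed_e_def by (simp add: closed_INT)
qed

lemma g_beta_prox_gap:
  fixes g :: "'a::euclidean_space \<Rightarrow> ereal" and u yd :: 'a
  assumes g: "proper_e g" "proper_e (fconj g)"
    and sc: "strongly_convex_e (fconj g) \<mu>" "\<mu> \<ge> 0" and \<beta>: "\<beta> > 0"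
  defines "y \<equiv> prox (1 / \<beta>) (fconj g) (yd + (1 / \<beta>) *\<^sub>R u)"
  shows "y \<in> dom_e (fconj g)"
    and "ereal (inner u y') - fconj g y' - ereal (\<beta> / 2 * (norm (y' - yd))\<^sup>2)
          + ereal ((\<beta> + \<mu>) / 2 * (norm (y' - y))\<^sup>2)
        \<le> ereal (inner u y) - fconj g y - ereal (\<beta> / 2 * (norm (y - yd))\<^sup>2)"
proof -
  obtain a b where minorant: "\<And>y. ereal (inner a y + b) \<le> fconj g y"
    using fconj_affine_minorant[OF g(1)] by blast
  note three_point = prox_three_point[OF closed_fconj[OF g(1)] g(2) minorant sc, of "1 / \<beta>"]
  show "y \<in> dom_e (fconj g)"
    unfolding y_def using three_point(1) \<beta> by simp
  then obtain H where H: "fconj g y = ereal H"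
    using g(2) by (cases "fconj g y") (auto simp: dom_e_def proper_e_def)
  have expand: "\<beta> / 2 * (norm (q - (yd + (1 / \<beta>) *\<^sub>R u)))\<^sup>2
      = \<beta> / 2 * (norm (q - yd))\<^sup>2 - inner u q + inner u yd + (norm u)\<^sup>2 / (2 * \<beta>)" for q
    unfolding norm_diff_add_scaleR_power2
    using \<beta> by (simp add: field_simps power2_eq_square inner_diff_right)
  show "ereal (inner u y') - fconj g y' - ereal (\<beta> / 2 * (norm (y' - yd))\<^sup>2)
        + ereal ((\<beta> + \<mu>) / 2 * (norm (y' - y))\<^sup>2)
      \<le> ereal (inner u y) - fconj g y - ereal (\<beta> / 2 * (norm (y - yd))\<^sup>2)"
  proof (cases "fconj g y'")
    case (real H')
    have "H + \<beta> / 2 * (norm (y - (yd + (1 / \<beta>) *\<^sub>R u)))\<^sup>2 + (\<beta> / 2 + \<mu> / 2) * (norm (y' - y))\<^sup>2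
        \<le> H' + \<beta> / 2 * (norm (y' - (yd + (1 / \<beta>) *\<^sub>R u)))\<^sup>2"
      using three_point(2)[where v = "yd + (1 / \<beta>) *\<^sub>R u" and w = y'] \<beta> H real
      unfolding y_def by simp
    then show ?thesis
      unfolding expand using H real by (simp add: field_simps)
  qed (use H g(2) in \<open>auto simp: proper_e_def\<close>)
qed

lemma g_beta_prox:
  fixes g :: "'a::euclidean_space \<Rightarrow> ereal" and u yd :: 'a
  assumes g: "proper_e g" "proper_e (fconj g)"
    and sc: "strongly_convex_e (fconj g) \<mu>" "\<mu> \<ge> 0" and \<beta>: "\<beta> > 0"
  defines "y \<equiv> prox (1 / \<beta>) (fconj g) (yd + (1 / \<beta>) *\<^sub>R u)"
  shows "g_beta g \<beta> u yd = ereal (inner u y) - fconj g y - ereal (\<beta> / 2 * (norm (y - yd))\<^sup>2)"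
  unfolding g_beta_def
proof (rule antisym)
  show "(SUP y'. ereal (inner u y') - fconj g y' - ereal (\<beta> / 2 * (norm (y' - yd))\<^sup>2))
      \<le> ereal (inner u y) - fconj g y - ereal (\<beta> / 2 * (norm (y - yd))\<^sup>2)"
  proof (rule SUP_least)
    fix y'
    note gap = g_beta_prox_gap(2)[OF g sc \<beta>, where u = u and yd = yd and y' = y', folded y_def]
    have "0 \<le> (\<beta> + \<mu>) / 2 * (norm (y' - y))\<^sup>2" using \<beta> sc(2) by simp
    then show "ereal (inner u y') - fconj g y' - ereal (\<beta> / 2 * (norm (y' - yd))\<^sup>2)
        \<le> ereal (inner u y) - fconj g y - ereal (\<beta> / 2 * (norm (y - yd))\<^sup>2)"
      by (intro order_trans[OF ereal_le_add_self gap]) simp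
  qed
qed (rule SUP_upper, simp)

lemma g_beta_smooth:
  fixes g :: "'a::euclidean_space \<Rightarrow> ereal" and u u' yd :: 'a
  assumes g: "proper_e g" "proper_e (fconj g)"
    and sc: "strongly_convex_e (fconj g) \<mu>" "\<mu> \<ge> 0" and \<beta>: "\<beta> > 0"
  defines "y \<equiv> prox (1 / \<beta>) (fconj g) (yd + (1 / \<beta>) *\<^sub>R u)"
  shows "g_beta g \<beta> u' yd
    \<le> g_beta g \<beta> u yd + ereal (inner (u' - u) y + (norm (u' - u))\<^sup>2 / (2 * (\<beta> + \<mu>)))"
proof -
  define y' where "y' = prox (1 / \<beta>) (fconj g) (yd + (1 / \<beta>) *\<^sub>R u')"
  note at_u = g_beta_prox_gap[OF g sc \<beta>, where u = u and yd = yd, folded y_def]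
  note at_u' = g_beta_prox_gap[OF g sc \<beta>, where u = u' and yd = yd, folded y'_def]
  note value_u = g_beta_prox[OF g sc \<beta>, where u = u and yd = yd, folded y_def]
  note value_u' = g_beta_prox[OF g sc \<beta>, where u = u' and yd = yd, folded y'_def]
  obtain H H' where H: "fconj g y = ereal H" and H': "fconj g y' = ereal H'"
    using proper_e_dom_eE[OF g(2) at_u(1)] proper_e_dom_eE[OF g(2) at_u'(1)] by metis
  have gap: "inner u y' - H' - \<beta> / 2 * (norm (y' - yd))\<^sup>2 + (\<beta> + \<mu>) / 2 * (norm (y' - y))\<^sup>2
      \<le> inner u y - H - \<beta> / 2 * (norm (y - yd))\<^sup>2"
    using at_u(2)[of y'] H H' by simp
  have "inner (u' - u) (y' - y) \<le> (norm (u' - u))\<^sup>2 / (2 * (\<beta> + \<mu>)) + (\<beta> + \<mu>) / 2 * (norm (y' - y))\<^sup>2"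
    using \<beta> sc(2) by (intro inner_le_Young) simp
  then show ?thesis
    using gap value_u value_u' H H' by (simp add: inner_diff_left inner_diff_right)
qed

section \<open>The momentum quadratic form\<close>

lemma momentum_gap_nonneg:
  fixes p L \<mu> t :: real
  assumes p: "p \<ge> 0" and L: "L > 0" and \<mu>: "\<mu> \<ge> 0" and t: "0 < t" "t < 1"
    and cond1: "0 \<le> (1 - t) * p + \<mu> * t * (1 - t) - L * t\<^sup>2"
    and cond2: "0 \<le> (L + \<mu>) * t * (p + (L + \<mu>) * t) - L * p"
  shows "0 \<le> (1 - t) * (p + (L + \<mu>) * t)\<^sup>2 - L * p"
proof (cases "\<mu> = 0")
  case True
  \<comment> \<open>then both conditions force (1 - t) p = L t^2, and the gap vanishes\<close>
  have "L * (L * t\<^sup>2 - (1 - t) * p) = L * t * (p + L * t) - L * p"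
    by (simp add: algebra_simps power2_eq_square)
  then have "0 \<le> L * (L * t\<^sup>2 - (1 - t) * p)"
    using cond2 True by simp
  then have eq: "(1 - t) * p = L * t\<^sup>2"
    using cond1 True L t by (simp add: zero_le_mult_iff)
  then have "(1 - t) * (p + L * t) = L * t"
    by (simp add: algebra_simps power2_eq_square)
  moreover have "(1 - t) * ((1 - t) * (p + L * t)\<^sup>2 - L * p)
      = ((1 - t) * (p + L * t))\<^sup>2 - L * ((1 - t) * p)"
    by (simp add: algebra_simps power2_eq_square)
  ultimately have "(1 - t) * ((1 - t) * (p + L * t)\<^sup>2 - L * p) = 0"
    unfolding eq by (simp add: power2_eq_square)
  then show ?thesis using True t by simp
next
  case False
  let ?Q = "L + \<mu>" and ?z = "(L + \<mu>) * t\<^sup>2 - (1 - t) * p"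
  have "\<mu> * t * (1 - t) * ((1 - t) * (p + ?Q * t)\<^sup>2 - L * p)
      = ((1 - t) * p + \<mu> * t * (1 - t) - L * t\<^sup>2) * ((1 - t) * (?Q * t * (p + ?Q * t) - L * p))
        + L * (1 - t) * ?z\<^sup>2"
    by (simp add: algebra_simps power2_eq_square)
  also have "\<dots> \<ge> 0" using cond1 cond2 L t by simp
  finally have "0 \<le> \<mu> * t * (1 - t) * ((1 - t) * (p + ?Q * t)\<^sup>2 - L * p)" .
  moreover have "\<mu> * t * (1 - t) > 0" using False \<mu> t by simp
  ultimately show ?thesis by (simp add: zero_le_mult_iff)
qed

lemma momentum_coefficients:
  fixes P L \<mu> t a :: real
  assumes P: "P > 0" and L: "L > 0" and \<mu>: "\<mu> \<ge> 0" and t: "0 < t" "t < 1" and a: "0 < a"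
    and cond1: "0 \<le> (1 - t) * P * a\<^sup>2 + \<mu> * t * (1 - t) - L * t\<^sup>2"
    and cond2: "P * (L + \<mu>) * t * a\<^sup>2 + (L + \<mu>)\<^sup>2 * t\<^sup>2 \<ge> P * L * a\<^sup>2"
  defines "D \<equiv> P * a\<^sup>2 + (L + \<mu>) * t"
  defines "\<eta> \<equiv> (1 - a) * a * P / D"
  defines "A \<equiv> (1 - t) * P * a\<^sup>2 + \<mu> * t * (1 - t) - L * t\<^sup>2"
    and "B \<equiv> (1 - t) * P * (1 - a) * a - L * t * \<eta>"
    and "C \<equiv> (1 - t) * P * (1 - a)\<^sup>2 - L * \<eta>\<^sup>2"
  shows "0 \<le> C" and "B\<^sup>2 \<le> A * C"
proof -
  define p where "p = P * a\<^sup>2"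
  define G where "G = (1 - t) * D\<^sup>2 - L * p"
  have D: "D > 0" using P a L \<mu> t by (simp add: D_def add_pos_nonneg)
  have cond2': "0 \<le> (L + \<mu>) * t * D - L * p"
    using cond2 by (simp add: D_def p_def algebra_simps power2_eq_square)
  have "0 \<le> G"
    unfolding G_def D_def using momentum_gap_nonneg[of p L \<mu> t] cond1 cond2' P L \<mu> t
    by (simp add: D_def p_def algebra_simps)
  have \<eta>D: "\<eta> * D = (1 - a) * a * P" using D by (simp add: \<eta>_def)
  have CD: "C * D\<^sup>2 = P * (1 - a)\<^sup>2 * G"
  proof -
    have "C * D\<^sup>2 = (1 - t) * P * (1 - a)\<^sup>2 * D\<^sup>2 - L * (\<eta> * D)\<^sup>2"
      by (simp add: C_def algebra_simps power2_eq_square)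
    then show ?thesis unfolding \<eta>D G_def p_def by (simp add: algebra_simps power2_eq_square)
  qed
  have BD: "B * D = P * (1 - a) * a * ((1 - t) * D - L * t)"
  proof -
    have "B * D = (1 - t) * P * (1 - a) * a * D - L * t * (\<eta> * D)"
      by (simp add: B_def algebra_simps)
    then show ?thesis unfolding \<eta>D by (simp add: algebra_simps)
  qed
  have AG: "A * G = p * ((1 - t) * D - L * t)\<^sup>2 + A * ((1 - t) * ((L + \<mu>) * t * D - L * p))"
    by (simp add: A_def G_def D_def p_def algebra_simps power2_eq_square)
  have "C * D\<^sup>2 \<ge> 0" unfolding CD using P \<open>0 \<le> G\<close> by simp
  then show "0 \<le> C" using D by (simp add: zero_le_mult_iff)
  have "(A * C - B\<^sup>2) * D\<^sup>2 = P * (1 - a)\<^sup>2 * (A * G - p * ((1 - t) * D - L * t)\<^sup>2)"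
    unfolding left_diff_distrib mult.assoc CD power_mult_distrib[symmetric] BD
    by (simp add: p_def algebra_simps power2_eq_square)
  also have "\<dots> \<ge> 0"
    unfolding AG using P t cond1 cond2' by (simp add: A_def)
  finally show "B\<^sup>2 \<le> A * C" using D by (simp add: zero_le_mult_iff)
qed

lemma momentum_quadratic_bound:
  fixes e d :: "'a::real_inner"
  assumes P: "P > 0" and L: "L > 0" and \<mu>: "\<mu> \<ge> 0" and t: "0 < t" and a: "0 < a"
    and cond1: "P * (1 - t) * a\<^sup>2 + \<mu> * (1 - t) * t \<ge> L * t\<^sup>2"
    and cond2: "P * (L + \<mu>) * t * a\<^sup>2 + (L + \<mu>)\<^sup>2 * t\<^sup>2 \<ge> P * L * a\<^sup>2"
  shows "L * (norm (t *\<^sub>R e - ((1 - a) * a / (a\<^sup>2 + ((L + \<mu>) / P) * t)) *\<^sub>R d))\<^sup>2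
      - \<mu> * t * (1 - t) * (norm e)\<^sup>2
    \<le> (1 - t) * P * (norm ((1 - a) *\<^sub>R d - a *\<^sub>R e))\<^sup>2"
proof -
  define \<eta> where "\<eta> = (1 - a) * a * P / (P * a\<^sup>2 + (L + \<mu>) * t)"
  have \<eta>: "(1 - a) * a / (a\<^sup>2 + ((L + \<mu>) / P) * t) = \<eta>"
    using P by (simp add: \<eta>_def field_simps)
  have "0 < L * t\<^sup>2" using L t by simp
  also have "\<dots> \<le> (1 - t) * (P * a\<^sup>2 + \<mu> * t)" using cond1 by (simp add: algebra_simps)
  finally have "0 < (1 - t) * (P * a\<^sup>2 + \<mu> * t)" .
  moreover have "0 < P * a\<^sup>2 + \<mu> * t" using P a \<mu> t by (simp add: add_pos_nonneg)
  ultimately have "t < 1" by (simp add: zero_less_mult_iff)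
  have cond1': "0 \<le> (1 - t) * P * a\<^sup>2 + \<mu> * t * (1 - t) - L * t\<^sup>2"
    using cond1 by (simp add: algebra_simps)
  note coeffs = momentum_coefficients[OF P L \<mu> t \<open>t < 1\<close> a cond1' cond2, folded \<eta>_def]
  have "(1 - t) * P * (norm ((1 - a) *\<^sub>R d - a *\<^sub>R e))\<^sup>2
      - (L * (norm (t *\<^sub>R e - \<eta> *\<^sub>R d))\<^sup>2 - \<mu> * t * (1 - t) * (norm e)\<^sup>2)
    = ((1 - t) * P * a\<^sup>2 + \<mu> * t * (1 - t) - L * t\<^sup>2) * (norm e)\<^sup>2
      - 2 * ((1 - t) * P * (1 - a) * a - L * t * \<eta>) * inner e d
      + ((1 - t) * P * (1 - a)\<^sup>2 - L * \<eta>\<^sup>2) * (norm d)\<^sup>2"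
    unfolding norm_scaleR_diff_scaleR_power2 norm_minus_commute[of "(1 - a) *\<^sub>R d"]
    by (simp add: algebra_simps power2_eq_square inner_commute)
  also have "\<dots> \<ge> 0"
    using quadratic_form_nonneg[OF cond1' coeffs] .
  finally show ?thesis unfolding \<eta> by simp
qed

section \<open>One step of the scheme\<close>

locale primal_dual_scheme =
  fixes f :: "real^'p \<Rightarrow> ereal" and g :: "real^'n \<Rightarrow> ereal" and K :: "real^'p^'n"
    and \<mu>f \<mu>g \<beta>0 :: real and \<tau> :: "nat \<Rightarrow> real" and yd :: "real^'n"
    and xs xh :: "nat \<Rightarrow> real^'p" and ys yt :: "nat \<Rightarrow> real^'n"
  assumes f: "pcc f" and g: "proper_e g" and K: "K \<noteq> 0"
    and muf: "strongly_convex_e f \<mu>f" "\<mu>f \<ge> 0"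
    and mug: "strongly_convex_e (fconj g) \<mu>g" "\<mu>g \<ge> 0"
    and beta0: "\<beta>0 > 0"
    and tau: "\<And>j. 0 < \<tau> j \<and> \<tau> j \<le> 1"
    and x0: "xs 0 \<in> dom_e f" and yt0: "yt 0 \<in> dom_e (fconj g)"
    and y_step: "\<And>j. ys (Suc j) = prox (1 / beta_seq \<beta>0 \<tau> j) (fconj g)
                         (yd + (1 / beta_seq \<beta>0 \<tau> j) *\<^sub>R (K *v xh j))"
    and x_step: "\<And>j. xs (Suc j) = prox (1 / L_seq K \<beta>0 \<tau> \<mu>g j) f
                         (xh j - (1 / L_seq K \<beta>0 \<tau> \<mu>g j) *\<^sub>R (transpose K *v ys (Suc j)))"
    and xh_step: "\<And>j. xh (Suc j) = xs (Suc j) + eta_seq K \<beta>0 \<tau> \<mu>f \<mu>g j *\<^sub>R (xs (Suc j) - xs j)"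
    and yt_step: "\<And>j. yt (Suc j) = (1 - \<tau> j) *\<^sub>R yt j + \<tau> j *\<^sub>R ys (Suc j)"
begin

abbreviation \<beta> where "\<beta> \<equiv> beta_seq \<beta>0 \<tau>"
abbreviation L where "L \<equiv> L_seq K \<beta>0 \<tau> \<mu>g"

text \<open>Real-valued versions, meaningful on the domains only (real_of_ereal sends infinities to 0).\<close>

definition f_real :: "real^'p \<Rightarrow> real" where
  "f_real x = real_of_ereal (f x)"

definition conj_real :: "real^'n \<Rightarrow> real" where
  "conj_real y = real_of_ereal (fconj g y)"

definition lagr_real :: "real^'p \<Rightarrow> real^'n \<Rightarrow> real" where
  "lagr_real x y = f_real x + inner (K *v x) y - conj_real y"

definition g_beta_real :: "nat \<Rightarrow> real^'n \<Rightarrow> real" where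
  "g_beta_real j u = real_of_ereal (g_beta g (\<beta> j) u yd)"

definition zs :: "nat \<Rightarrow> real^'p" where
  "zs j = (1 / \<tau> j) *\<^sub>R (xs (Suc j) - (1 - \<tau> j) *\<^sub>R xs j)"

lemma beta_pos: "\<beta> j > 0"
proof (induction j)
  case (Suc j)
  then show ?case using tau[of "Suc j"] by simp
qed (use beta0 in simp)

lemma beta_eq_Suc: "\<beta> j = (1 + \<tau> (Suc j)) * \<beta> (Suc j)"
  using tau[of "Suc j"] by simp

lemma K_norm_le: "norm (K *v v) \<le> onorm (\<lambda>x. K *v x) * norm v"
  by (rule onorm) (rule matrix_vector_mul_bounded_linear)

lemma L_pos: "L j > 0"
proof -
  have "\<not> (\<forall>x. K *v x = 0)" using K by (metis matrix_eq matrix_vector_mult_0)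
  then have "onorm (\<lambda>x. K *v x) > 0"
    by (simp add: onorm_pos_lt[OF matrix_vector_mul_bounded_linear])
  then show ?thesis
    using beta_pos[of j] mug(2) by (simp add: L_seq_def add_pos_nonneg)
qed

lemma proper_f: "proper_e f" and closed_f: "closed_e f" and convex_f: "convex_e f"
  using f by (simp_all add: pcc_def)

lemma proper_conj: "proper_e (fconj g)"
  by (rule proper_fconj[OF g yt0])

lemma f_eq_ereal: "x \<in> dom_e f \<Longrightarrow> f x = ereal (f_real x)"
  by (metis proper_e_dom_eE[OF proper_f] f_real_def real_of_ereal.simps(1))

lemma conj_eq_ereal: "y \<in> dom_e (fconj g) \<Longrightarrow> fconj g y = ereal (conj_real y)"
  by (metis proper_e_dom_eE[OF proper_conj] conj_real_def real_of_ereal.simps(1))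

lemma dom_f_convex_comb:
  assumes "x \<in> dom_e f" "x' \<in> dom_e f" "0 \<le> t" "t \<le> 1"
  shows "(1 - t) *\<^sub>R x + t *\<^sub>R x' \<in> dom_e f"
proof -
  have "f ((1 - t) *\<^sub>R x + t *\<^sub>R x')
      \<le> ereal ((1 - t) * f_real x + t * f_real x' - \<mu>f / 2 * t * (1 - t) * (norm (x - x'))\<^sup>2)"
    using strongly_convex_eD[OF muf(1) f_eq_ereal f_eq_ereal] assms by simp
  then show ?thesis unfolding dom_e_def using order.strict_trans1 by fastforce
qed

lemma f_minorant: "\<exists>a b. \<forall>x. ereal (inner a x + b) \<le> f x"
  by (rule convex_e_affine_minorant[OF convex_f closed_f proper_f])

lemma ys_dom: "ys (Suc j) \<in> dom_e (fconj g)"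
  unfolding y_step by (rule g_beta_prox_gap(1)[OF g proper_conj mug beta_pos])

lemma g_beta_eq_ereal: "g_beta g (\<beta> j) u yd = ereal (g_beta_real j u)"
proof -
  let ?y = "prox (1 / \<beta> j) (fconj g) (yd + (1 / \<beta> j) *\<^sub>R u)"
  have "g_beta g (\<beta> j) u yd = ereal (inner u ?y) - fconj g ?y - ereal (\<beta> j / 2 * (norm (?y - yd))\<^sup>2)"
    by (rule g_beta_prox[OF g proper_conj mug beta_pos])
  then show ?thesis
    unfolding g_beta_real_def
    using conj_eq_ereal[OF g_beta_prox_gap(1)[OF g proper_conj mug beta_pos]] by simp
qed

lemma g_beta_at_ys:
  "g_beta_real j (K *v xh j)
    = inner (K *v xh j) (ys (Suc j)) - conj_real (ys (Suc j)) - \<beta> j / 2 * (norm (ys (Suc j) - yd))\<^sup>2"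
  using g_beta_prox[OF g proper_conj mug beta_pos[of j], where u = "K *v xh j" and yd = yd,
      folded y_step]
    g_beta_eq_ereal conj_eq_ereal[OF ys_dom] by simp

lemma xs_dom: "xs j \<in> dom_e f"
proof (cases j)
  case (Suc i)
  obtain a b where "\<And>x. ereal (inner a x + b) \<le> f x" using f_minorant by blast
  from prox_three_point(1)[OF closed_f proper_f this muf] show ?thesis
    unfolding Suc x_step using L_pos by simp
qed (use x0 in simp)

lemma yt_dom: "yt j \<in> dom_e (fconj g)"
proof (induction j)
  case (Suc j)
  have "fconj g (yt (Suc j)) \<le> ereal ((1 - \<tau> j) * conj_real (yt j) + \<tau> j * conj_real (ys (Suc j))
      - \<mu>g / 2 * \<tau> j * (1 - \<tau> j) * (norm (yt j - ys (Suc j)))\<^sup>2)"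
    unfolding yt_step
    using strongly_convex_eD[OF mug(1) conj_eq_ereal[OF Suc] conj_eq_ereal[OF ys_dom]] tau[of j]
    by simp
  then show ?case unfolding dom_e_def using order.strict_trans1 by fastforce
qed (use yt0 in simp)

lemma x_step_three_point:
  assumes w: "w \<in> dom_e f"
  shows "f_real (xs (Suc j)) + L j / 2 * (norm (xs (Suc j) - xh j))\<^sup>2
      + inner (K *v (xs (Suc j) - xh j)) (ys (Suc j)) + (L j + \<mu>f) / 2 * (norm (w - xs (Suc j)))\<^sup>2
    \<le> f_real w + L j / 2 * (norm (w - xh j))\<^sup>2 + inner (K *v (w - xh j)) (ys (Suc j))"
proof -
  let ?u = "transpose K *v ys (Suc j)"
  obtain a b where minorant: "\<And>x. ereal (inner a x + b) \<le> f x" using f_minorant by blast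
  have expand: "L j / 2 * (norm (q - (xh j - (1 / L j) *\<^sub>R ?u)))\<^sup>2
      = L j / 2 * (norm (q - xh j))\<^sup>2 + inner ?u (q - xh j) + (norm ?u)\<^sup>2 / (2 * L j)" for q
    using norm_diff_add_scaleR_power2[of q "xh j" "1 / L j" "- ?u"] L_pos[of j]
    by (simp add: field_simps power2_eq_square)
  have adjoint: "inner ?u q = inner (K *v q) (ys (Suc j))" for q
    by (metis dot_lmul_matrix inner_commute transpose_matrix_vector)
  have "f (xs (Suc j)) + ereal (L j / 2 * (norm (xs (Suc j) - (xh j - (1 / L j) *\<^sub>R ?u)))\<^sup>2)
      + ereal ((L j / 2 + \<mu>f / 2) * (norm (w - xs (Suc j)))\<^sup>2)
    \<le> f w + ereal (L j / 2 * (norm (w - (xh j - (1 / L j) *\<^sub>R ?u)))\<^sup>2)"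
    using prox_three_point(2)[OF closed_f proper_f minorant muf, where \<gamma> = "1 / L j"
        and v = "xh j - (1 / L j) *\<^sub>R ?u" and w = w, folded x_step] L_pos[of j] by simp
  then show ?thesis
    unfolding expand adjoint f_eq_ereal[OF xs_dom] f_eq_ereal[OF w] by (simp add: field_simps)
qed

lemma g_beta_step:
  "g_beta_real j (K *v xs (Suc j)) \<le> g_beta_real j (K *v xh j)
    + inner (K *v (xs (Suc j) - xh j)) (ys (Suc j)) + L j / 2 * (norm (xs (Suc j) - xh j))\<^sup>2"
proof -
  let ?d = "xs (Suc j) - xh j"
  have "g_beta g (\<beta> j) (K *v xs (Suc j)) yd \<le> g_beta g (\<beta> j) (K *v xh j) yd
      + ereal (inner (K *v ?d) (ys (Suc j)) + (norm (K *v ?d))\<^sup>2 / (2 * (\<beta> j + \<mu>g)))"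
    using g_beta_smooth[OF g proper_conj mug beta_pos[of j], where u = "K *v xh j"
        and u' = "K *v xs (Suc j)" and yd = yd, folded y_step]
    by (simp add: matrix_vector_mult_diff_distrib)
  then have "g_beta_real j (K *v xs (Suc j)) \<le> g_beta_real j (K *v xh j)
      + (inner (K *v ?d) (ys (Suc j)) + (norm (K *v ?d))\<^sup>2 / (2 * (\<beta> j + \<mu>g)))"
    by (simp add: g_beta_eq_ereal)
  moreover have "(norm (K *v ?d))\<^sup>2 / (2 * (\<beta> j + \<mu>g)) \<le> L j / 2 * (norm ?d)\<^sup>2"
  proof -
    have pos: "2 * (\<beta> j + \<mu>g) > 0" using beta_pos[of j] mug(2) by simp
    have "(norm (K *v ?d))\<^sup>2 \<le> (onorm (\<lambda>x. K *v x) * norm ?d)\<^sup>2"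
      using K_norm_le[of ?d] by (simp add: power_mono)
    then have "(norm (K *v ?d))\<^sup>2 / (2 * (\<beta> j + \<mu>g))
        \<le> (onorm (\<lambda>x. K *v x) * norm ?d)\<^sup>2 / (2 * (\<beta> j + \<mu>g))"
      using pos by (rule divide_right_mono[OF _ less_imp_le])
    also have "\<dots> = L j / 2 * (norm ?d)\<^sup>2"
      using pos by (simp add: L_seq_def power_mult_distrib)
    finally show ?thesis .
  qed
  ultimately show ?thesis by linarith
qed

lemma descent_step:
  assumes "w \<in> dom_e f"
  shows "f_real (xs (Suc j)) + g_beta_real j (K *v xs (Suc j)) + (L j + \<mu>f) / 2 * (norm (w - xs (Suc j)))\<^sup>2
    \<le> lagr_real w (ys (Suc j)) - \<beta> j / 2 * (norm (ys (Suc j) - yd))\<^sup>2 + L j / 2 * (norm (w - xh j))\<^sup>2"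
  using x_step_three_point[OF assms, of j] g_beta_step[of j] g_beta_at_ys[of j]
  unfolding lagr_real_def matrix_vector_mult_diff_distrib inner_diff_left by linarith

lemma lagr_real_convex_left:
  assumes "x \<in> dom_e f" "x' \<in> dom_e f" "0 \<le> t" "t \<le> 1"
  shows "lagr_real ((1 - t) *\<^sub>R x + t *\<^sub>R x') y
    \<le> (1 - t) * lagr_real x y + t * lagr_real x' y - \<mu>f / 2 * t * (1 - t) * (norm (x - x'))\<^sup>2"
proof -
  have "f_real ((1 - t) *\<^sub>R x + t *\<^sub>R x')
      \<le> (1 - t) * f_real x + t * f_real x' - \<mu>f / 2 * t * (1 - t) * (norm (x - x'))\<^sup>2"
    using strongly_convex_eD[OF muf(1) f_eq_ereal[OF assms(1)] f_eq_ereal[OF assms(2)] assms(3,4)]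
    unfolding f_eq_ereal[OF dom_f_convex_comb[OF assms]] by simp
  then show ?thesis
    unfolding lagr_real_def
    by (simp add: matrix_vector_right_distrib matrix_vector_mult_scaleR inner_add_left algebra_simps)
qed

lemma lagr_real_concave_right:
  assumes "y \<in> dom_e (fconj g)" "y' \<in> dom_e (fconj g)" "0 \<le> t" "t \<le> 1"
  shows "(1 - t) * lagr_real x y + t * lagr_real x y' \<le> lagr_real x ((1 - t) *\<^sub>R y + t *\<^sub>R y')"
proof -
  have "fconj g ((1 - t) *\<^sub>R y + t *\<^sub>R y')
      \<le> ereal ((1 - t) * conj_real y + t * conj_real y' - \<mu>g / 2 * t * (1 - t) * (norm (y - y'))\<^sup>2)"
    using strongly_convex_eD[OF mug(1) conj_eq_ereal[OF assms(1)] conj_eq_ereal[OF assms(2)] assms(3,4)] .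
  also have "\<dots> \<le> ereal ((1 - t) * conj_real y + t * conj_real y')"
    using mug(2) assms(3,4) by simp
  finally have "fconj g ((1 - t) *\<^sub>R y + t *\<^sub>R y') \<le> ereal ((1 - t) * conj_real y + t * conj_real y')" .
  moreover from this have "(1 - t) *\<^sub>R y + t *\<^sub>R y' \<in> dom_e (fconj g)"
    unfolding dom_e_def using order.strict_trans1 by fastforce
  ultimately show ?thesis
    unfolding lagr_real_def using conj_eq_ereal by (simp add: inner_add_right algebra_simps)
qed

lemma lagr_real_le_F_beta:
  assumes "x \<in> dom_e f" "y \<in> dom_e (fconj g)"
  shows "lagr_real x y - \<beta> j / 2 * (norm (y - yd))\<^sup>2 \<le> f_real x + g_beta_real j (K *v x)"
proof -
  have "ereal (inner (K *v x) y) - fconj g y - ereal (\<beta> j / 2 * (norm (y - yd))\<^sup>2)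
      \<le> g_beta g (\<beta> j) (K *v x) yd"
    unfolding g_beta_def by (rule SUP_upper) simp
  then show ?thesis
    unfolding lagr_real_def conj_eq_ereal[OF assms(2)] g_beta_eq_ereal by simp
qed

lemma momentum_step:
  assumes cond1: "(L j + \<mu>f) * (1 - \<tau> (Suc j)) * (\<tau> j)\<^sup>2 + \<mu>f * (1 - \<tau> (Suc j)) * \<tau> (Suc j)
      \<ge> L (Suc j) * (\<tau> (Suc j))\<^sup>2"
    and cond2: "(L j + \<mu>f) * (L (Suc j) + \<mu>f) * \<tau> (Suc j) * (\<tau> j)\<^sup>2 + (L (Suc j) + \<mu>f)\<^sup>2 * (\<tau> (Suc j))\<^sup>2
      \<ge> (L j + \<mu>f) * L (Suc j) * (\<tau> j)\<^sup>2"
  defines "t \<equiv> \<tau> (Suc j)"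
  shows "L (Suc j) * (norm ((1 - t) *\<^sub>R xs (Suc j) + t *\<^sub>R x - xh (Suc j)))\<^sup>2
      - \<mu>f * t * (1 - t) * (norm (xs (Suc j) - x))\<^sup>2
    \<le> (1 - t) * (L j + \<mu>f) * (\<tau> j)\<^sup>2 * (norm (zs j - x))\<^sup>2"
proof -
  let ?a = "\<tau> j" and ?e = "x - xs (Suc j)" and ?d = "xs (Suc j) - xs j"
  let ?\<eta> = "eta_seq K \<beta>0 \<tau> \<mu>f \<mu>g j"
  have bound: "L (Suc j) * (norm (t *\<^sub>R ?e - ?\<eta> *\<^sub>R ?d))\<^sup>2 - \<mu>f * t * (1 - t) * (norm ?e)\<^sup>2
      \<le> (1 - t) * (L j + \<mu>f) * (norm ((1 - ?a) *\<^sub>R ?d - ?a *\<^sub>R ?e))\<^sup>2"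
    unfolding eta_seq_def Let_def t_def
    by (rule momentum_quadratic_bound) (use L_pos muf(2) tau cond1 cond2 in \<open>auto intro: add_pos_nonneg\<close>)
  have "(1 - t) *\<^sub>R xs (Suc j) + t *\<^sub>R x - xh (Suc j) = t *\<^sub>R ?e - ?\<eta> *\<^sub>R ?d"
    unfolding xh_step by (simp add: algebra_simps)
  moreover have "(1 - ?a) *\<^sub>R ?d - ?a *\<^sub>R ?e = ?a *\<^sub>R (zs j - x)"
    using tau[of j] by (simp add: zs_def algebra_simps)
  ultimately show ?thesis
    using bound tau[of j] by (simp add: norm_minus_commute power_mult_distrib mult.assoc)
qed

lemma V_fun_eq:
  assumes "x \<in> dom_e f"
  shows "V_fun f g K \<beta>0 \<tau> \<mu>f \<mu>g yd xs yt (Suc j) x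
    = ereal (f_real (xs (Suc j)) + g_beta_real j (K *v xs (Suc j)) - lagr_real x (yt (Suc j))
        + (L j + \<mu>f) * (\<tau> j)\<^sup>2 / 2 * (norm (zs j - x))\<^sup>2)"
  unfolding V_fun_def F_beta_def lagr_def lagr_real_def zs_def
  by (simp add: f_eq_ereal[OF assms] f_eq_ereal[OF xs_dom] conj_eq_ereal[OF yt_dom] g_beta_eq_ereal)

\<comment> \<open>the decrease of the smoothing parameter is absorbed by the proximal term in y\<close>
lemma beta_decrease:
  assumes "Q \<ge> 0"
  shows "(1 - \<tau> (Suc j)) * \<beta> j * Q \<le> \<beta> (Suc j) * Q"
proof -
  have "(1 - \<tau> (Suc j)) * \<beta> j = \<beta> (Suc j) - (\<tau> (Suc j))\<^sup>2 * \<beta> (Suc j)"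
    unfolding beta_eq_Suc[of j] by (simp add: algebra_simps power2_eq_square del: beta_seq.simps)
  moreover have "0 \<le> (\<tau> (Suc j))\<^sup>2 * \<beta> (Suc j)" using beta_pos[of "Suc j"] by (simp del: beta_seq.simps)
  ultimately show ?thesis using assms by (intro mult_right_mono) simp_all
qed

lemma norm_zs_Suc:
  "norm ((1 - \<tau> (Suc j)) *\<^sub>R xs (Suc j) + \<tau> (Suc j) *\<^sub>R x - xs (Suc (Suc j)))
    = \<tau> (Suc j) * norm (zs (Suc j) - x)"
proof -
  have "(1 - \<tau> (Suc j)) *\<^sub>R xs (Suc j) + \<tau> (Suc j) *\<^sub>R x - xs (Suc (Suc j))
      = - (\<tau> (Suc j) *\<^sub>R (zs (Suc j) - x))"
    using tau[of "Suc j"] by (simp add: zs_def algebra_simps)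
  then show ?thesis using tau[of "Suc j"] by simp
qed

lemma lyapunov_decrease:
  assumes cond1: "(L j + \<mu>f) * (1 - \<tau> (Suc j)) * (\<tau> j)\<^sup>2 + \<mu>f * (1 - \<tau> (Suc j)) * \<tau> (Suc j)
      \<ge> L (Suc j) * (\<tau> (Suc j))\<^sup>2"
    and cond2: "(L j + \<mu>f) * (L (Suc j) + \<mu>f) * \<tau> (Suc j) * (\<tau> j)\<^sup>2 + (L (Suc j) + \<mu>f)\<^sup>2 * (\<tau> (Suc j))\<^sup>2
      \<ge> (L j + \<mu>f) * L (Suc j) * (\<tau> j)\<^sup>2"
    and x: "x \<in> dom_e f"
  shows "V_fun f g K \<beta>0 \<tau> \<mu>f \<mu>g yd xs yt (Suc (Suc j)) x
    \<le> ereal (1 - \<tau> (Suc j)) * V_fun f g K \<beta>0 \<tau> \<mu>f \<mu>g yd xs yt (Suc j) x"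
proof -
  define t where "t = \<tau> (Suc j)"
  let ?x1 = "xs (Suc j)" and ?x2 = "xs (Suc (Suc j))" and ?y = "ys (Suc (Suc j))"
  let ?w = "(1 - t) *\<^sub>R ?x1 + t *\<^sub>R x" and ?Q = "(norm (?y - yd))\<^sup>2"
  let ?D = "(norm (?w - xh (Suc j)))\<^sup>2" and ?N = "(norm (?x1 - x))\<^sup>2"
  define V1 where "V1 = f_real ?x1 + g_beta_real j (K *v ?x1) - lagr_real x (yt (Suc j))
    + (L j + \<mu>f) * (\<tau> j)\<^sup>2 / 2 * (norm (zs j - x))\<^sup>2"
  define V2 where "V2 = f_real ?x2 + g_beta_real (Suc j) (K *v ?x2) - lagr_real x (yt (Suc (Suc j)))
    + (L (Suc j) + \<mu>f) * t\<^sup>2 / 2 * (norm (zs (Suc j) - x))\<^sup>2"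
  have t: "0 < t" "t \<le> 1" using tau by (simp_all add: t_def)
  have w: "?w \<in> dom_e f" using dom_f_convex_comb[OF xs_dom x] t by simp
  have concave: "(1 - t) * lagr_real x (yt (Suc j)) + t * lagr_real x ?y \<le> lagr_real x (yt (Suc (Suc j)))"
    unfolding yt_step[of "Suc j"] t_def
    using lagr_real_concave_right[OF yt_dom ys_dom[of "Suc j"]] tau[of "Suc j"] by simp
  have smoothing: "(1 - t) * (lagr_real ?x1 ?y - \<beta> j / 2 * ?Q)
      \<le> (1 - t) * (f_real ?x1 + g_beta_real j (K *v ?x1))"
    using lagr_real_le_F_beta[OF xs_dom ys_dom] t by (intro mult_left_mono) simp_all
  have "V2 = f_real ?x2 + g_beta_real (Suc j) (K *v ?x2) + (L (Suc j) + \<mu>f) / 2 * (norm (?w - ?x2))\<^sup>2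
      - lagr_real x (yt (Suc (Suc j)))"
    unfolding V2_def norm_zs_Suc t_def by (simp add: power_mult_distrib)
  also have "\<dots> \<le> lagr_real ?w ?y - \<beta> (Suc j) / 2 * ?Q + L (Suc j) / 2 * ?D - lagr_real x (yt (Suc (Suc j)))"
    using descent_step[OF w, of "Suc j"] by simp
  also have "\<dots> \<le> (1 - t) * lagr_real ?x1 ?y + t * lagr_real x ?y - \<beta> (Suc j) / 2 * ?Q
      + (L (Suc j) * ?D - \<mu>f * t * (1 - t) * ?N) / 2 - lagr_real x (yt (Suc (Suc j)))"
    using lagr_real_convex_left[OF xs_dom[of "Suc j"] x less_imp_le[OF t(1)] t(2), where y = ?y] by argo
  also have "\<dots> \<le> (1 - t) * (lagr_real ?x1 ?y - \<beta> j / 2 * ?Q)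
      + (L (Suc j) * ?D - \<mu>f * t * (1 - t) * ?N) / 2 - (1 - t) * lagr_real x (yt (Suc j))"
    using concave beta_decrease[OF zero_le_power2[of "norm (?y - yd)"], of j, folded t_def] by argo
  also have "\<dots> \<le> (1 - t) * (lagr_real ?x1 ?y - \<beta> j / 2 * ?Q)
      + (1 - t) * (L j + \<mu>f) * (\<tau> j)\<^sup>2 / 2 * (norm (zs j - x))\<^sup>2 - (1 - t) * lagr_real x (yt (Suc j))"
    using momentum_step[OF cond1 cond2, of x, folded t_def] by simp
  also have "\<dots> \<le> (1 - t) * V1"
    unfolding V1_def using smoothing by (simp add: algebra_simps)
  finally have "V2 \<le> (1 - t) * V1" .
  then show ?thesis
    unfolding V_fun_eq[OF x] V1_def V2_def by (simp add: t_def)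
qed
end

theorem lemma3:
  fixes f :: "real^'p \<Rightarrow> ereal" and g :: "real^'n \<Rightarrow> ereal"
    and K :: "real^'p^'n"
    and \<mu>f \<mu>g \<beta>0 :: real and \<tau> :: "nat \<Rightarrow> real" and yd :: "real^'n"
    and xs xh :: "nat \<Rightarrow> real^'p" and ys yt :: "nat \<Rightarrow> real^'n"
    and k :: nat and x :: "real^'p"
  assumes f: "pcc f" and g: "pcc g" and K: "K \<noteq> 0"
    and muf: "\<mu>f \<ge> 0" "strongly_convex_e f \<mu>f"
    and mug: "\<mu>g \<ge> 0" "strongly_convex_e (fconj g) \<mu>g"
    and beta0: "\<beta>0 > 0"
    and tau: "\<And>j. 0 < \<tau> j \<and> \<tau> j \<le> 1"
    and x0: "xs 0 \<in> dom_e f" and yt0: "yt 0 \<in> dom_e (fconj g)"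
    and xh0: "xh 0 = xs 0"
    and y_step: "\<And>j. ys (Suc j) = prox (1 / beta_seq \<beta>0 \<tau> j) (fconj g)
                         (yd + (1 / beta_seq \<beta>0 \<tau> j) *\<^sub>R (K *v xh j))"
    and x_step: "\<And>j. xs (Suc j) = prox (1 / L_seq K \<beta>0 \<tau> \<mu>g j) f
                         (xh j - (1 / L_seq K \<beta>0 \<tau> \<mu>g j) *\<^sub>R (transpose K *v ys (Suc j)))"
    and xh_step: "\<And>j. xh (Suc j) = xs (Suc j) + eta_seq K \<beta>0 \<tau> \<mu>f \<mu>g j *\<^sub>R (xs (Suc j) - xs j)"
    and yt_step: "\<And>j. yt (Suc j) = (1 - \<tau> j) *\<^sub>R yt j + \<tau> j *\<^sub>R ys (Suc j)"
    and k: "k \<ge> 1"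
    and cond1: "(L_seq K \<beta>0 \<tau> \<mu>g (k - 1) + \<mu>f) * (1 - \<tau> k) * (\<tau> (k - 1))\<^sup>2
                 + \<mu>f * (1 - \<tau> k) * \<tau> k \<ge> L_seq K \<beta>0 \<tau> \<mu>g k * (\<tau> k)\<^sup>2"
    and cond2: "(L_seq K \<beta>0 \<tau> \<mu>g (k - 1) + \<mu>f) * (L_seq K \<beta>0 \<tau> \<mu>g k + \<mu>f) * \<tau> k * (\<tau> (k - 1))\<^sup>2
                 + (L_seq K \<beta>0 \<tau> \<mu>g k + \<mu>f)\<^sup>2 * (\<tau> k)\<^sup>2
                 \<ge> (L_seq K \<beta>0 \<tau> \<mu>g (k - 1) + \<mu>f) * L_seq K \<beta>0 \<tau> \<mu>g k * (\<tau> (k - 1))\<^sup>2"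
    and xdom: "x \<in> dom_e f"
  shows "V_fun f g K \<beta>0 \<tau> \<mu>f \<mu>g yd xs yt (Suc k) x
           \<le> ereal (1 - \<tau> k) * V_fun f g K \<beta>0 \<tau> \<mu>f \<mu>g yd xs yt k x"
proof -
  interpret primal_dual_scheme f g K \<mu>f \<mu>g \<beta>0 \<tau> yd xs xh ys yt
    using f g K muf mug beta0 tau x0 yt0 y_step x_step xh_step yt_step
    by unfold_locales (simp_all add: pcc_def)
  obtain j where "k = Suc j" using k by (cases k) auto
  then show ?thesis using lyapunov_decrease[OF _ _ xdom] cond1 cond2 by simp
qed

end
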